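(* With the setting in the context, for all $s,s'\in\mathrm{hom}(C,G)_{-1}$ and $v,v'\in\mathrm{hom}(C,G)^1$: (i) $\mathcal A_s\mathcal B_v=\mathcal B_v\mathcal A_s$; (ii) $\mathcal A_s\mathcal A_{s'}=\delta(s,s')\mathcal A_s$ and $\mathcal B_v\mathcal B_{v'}=\delta(v,v')\mathcal B_v$, where $\delta(\cdot,\cdot)$ is the Kronecker delta; (iii) $\sum_{s\in\mathrm{hom}(C,G)_{-1}}\mathcal A_s=\mathbb 1$ and $\sum_{v\in\mathrm{hom}(C,G)^1}\mathcal B_v=\mathbb 1$.
   Context: $(C_\bullet,\partial^C_\bullet)$ is a chain complex with each $C_n$ free abelian on a finite set $K_n$, $K_n\ne\emptyset$ for finitely many $n$; $(G_\bullet,\partial^G_\bullet)$ is a chain complex of finite abelian groups. $\mathrm{hom}(C,G)^p=\prod_n\mathrm{Hom}(C_n,G_{n-p})$ with $(\delta^pf)_n=f_{n-1}\partial^C_n-(-1)^p\partial^G_{n-p}f_n$. $\mathrm{hom}(C,G)_p=\mathrm{Hom}(\mathrm{hom}(C,G)^p,U(1))$ (written additively), $\chi_m(f)=m(f)$, $\delta_1m=m\circ\delta^0$. $\mathcal H=\bigotimes_n\bigotimes_{x\in K_n}\mathbb C[G_n]$ with orthonormal basis $|f\rangle$, $f\in\mathrm{hom}(C,G)^0$; $P_t|f\rangle=|f+t\rangle$, $Q_m|f\rangle=\chi_m(f)|f\rangle$; $A_t=P_{\delta^{-1}t}$ ($t\in\mathrm{hom}(C,G)^{-1}$), $B_m=Q_{\delta_1m}$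 ($m\in\mathrm{hom}(C,G)_1$). $\mathcal A_s=\frac1{|\mathrm{hom}(C,G)^{-1}|}\sum_{t\in\mathrm{hom}(C,G)^{-1}}\chi_s(t)A_t$ and $\mathcal B_v=\frac1{|\mathrm{hom}(C,G)_1|}\sum_{m\in\mathrm{hom}(C,G)_1}\chi_m(v)B_m$. *)

theory Defs
  imports Complex_Main "HOL-Algebra.Algebra"
begin

text \<open>
  Chain complex C: C_n is free abelian on the finite set K n (n :: int); the boundary
  is given on basis elements by integer coefficients:
  d^C_n x = sum over y in K (n-1) of dC n x y * y,  for x in K n.
  Chain complex G: each G n is a finite abelian group (HOL-Algebra, written
  multiplicatively), with boundary maps dG n : G n -> G (n-1).
  Elements of Hom(C_n, G_(n-p)) are identified with their values on the basis K n.
\<close>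

definition setting ::
  "(int \<Rightarrow> 'k set) \<Rightarrow> (int \<Rightarrow> 'k \<Rightarrow> 'k \<Rightarrow> int) \<Rightarrow> (int \<Rightarrow> 'g monoid) \<Rightarrow> (int \<Rightarrow> 'g \<Rightarrow> 'g) \<Rightarrow> bool"
  where
  "setting K dC G dG \<longleftrightarrow>
     (\<forall>n. finite (K n)) \<and> finite {n. K n \<noteq> {}} \<and>
     (\<forall>n x z. x \<in> K n \<longrightarrow> z \<in> K (n - 2) \<longrightarrow>
        (\<Sum>y\<in>K (n - 1). dC n x y * dC (n - 1) y z) = 0) \<and>
     (\<forall>n. comm_group (G n) \<and> finite (carrier (G n))) \<and>
     (\<forall>n. dG n \<in> hom (G n) (G (n - 1))) \<and>
     (\<forall>n a. a \<in> carrier (G n) \<longrightarrow> dG (n - 1) (dG n a) = \<one>\<^bsub>G (n - 2)\<^esub>)"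

text \<open>hom(C,G)^p, elements extensional (undefined off the bases).\<close>
definition cochains :: "(int \<Rightarrow> 'k set) \<Rightarrow> (int \<Rightarrow> 'g monoid) \<Rightarrow> int \<Rightarrow> (int \<Rightarrow> 'k \<Rightarrow> 'g) set" where
  "cochains K G p = {f. \<forall>n x. (x \<in> K n \<longrightarrow> f n x \<in> carrier (G (n - p))) \<and>
                              (x \<notin> K n \<longrightarrow> f n x = undefined)}"

definition cadd :: "(int \<Rightarrow> 'k set) \<Rightarrow> (int \<Rightarrow> 'g monoid) \<Rightarrow> int \<Rightarrow> (int \<Rightarrow> 'k \<Rightarrow> 'g) \<Rightarrow> (int \<Rightarrow> 'k \<Rightarrow> 'g) \<Rightarrow> (int \<Rightarrow> 'k \<Rightarrow> 'g)" where
  "cadd K G p f g = (\<lambda>n x. if x \<in> K n then f n x \<otimes>\<^bsub>G (n - p)\<^esub> g n x else undefined)"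

definition cneg :: "(int \<Rightarrow> 'k set) \<Rightarrow> (int \<Rightarrow> 'g monoid) \<Rightarrow> int \<Rightarrow> (int \<Rightarrow> 'k \<Rightarrow> 'g) \<Rightarrow> (int \<Rightarrow> 'k \<Rightarrow> 'g)" where
  "cneg K G p f = (\<lambda>n x. if x \<in> K n then inv\<^bsub>G (n - p)\<^esub> (f n x) else undefined)"

text \<open>Coboundary (delta^p f)_n = f_(n-1) o d^C_n - (-1)^p d^G_(n-p) o f_n, on basis elements.\<close>
definition cobdry ::
  "(int \<Rightarrow> 'k set) \<Rightarrow> (int \<Rightarrow> 'k \<Rightarrow> 'k \<Rightarrow> int) \<Rightarrow> (int \<Rightarrow> 'g monoid) \<Rightarrow> (int \<Rightarrow> 'g \<Rightarrow> 'g)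
    \<Rightarrow> int \<Rightarrow> (int \<Rightarrow> 'k \<Rightarrow> 'g) \<Rightarrow> (int \<Rightarrow> 'k \<Rightarrow> 'g)" where
  "cobdry K dC G dG p f = (\<lambda>n x. if x \<in> K n then
      (finprod (G (n - 1 - p)) (\<lambda>y. f (n - 1) y [^]\<^bsub>G (n - 1 - p)\<^esub> dC n x y) (K (n - 1)))
      \<otimes>\<^bsub>G (n - 1 - p)\<^esub>
      (if even p then inv\<^bsub>G (n - 1 - p)\<^esub> (dG (n - p) (f n x)) else dG (n - p) (f n x))
    else undefined)"

text \<open>hom(C,G)_p = Hom(hom(C,G)^p, U(1)), U(1) = unit circle in the complex numbers;
  chi_m(f) = m(f). Elements extensional.\<close>
definition dchains :: "(int \<Rightarrow> 'k set) \<Rightarrow> (int \<Rightarrow> 'g monoid) \<Rightarrow> int \<Rightarrow> ((int \<Rightarrow> 'k \<Rightarrow> 'g) \<Rightarrow> complex) set" where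
  "dchains K G p = {m. (\<forall>f\<in>cochains K G p. norm (m f) = 1) \<and>
      (\<forall>f\<in>cochains K G p. \<forall>g\<in>cochains K G p. m (cadd K G p f g) = m f * m g) \<and>
      (\<forall>f. f \<notin> cochains K G p \<longrightarrow> m f = undefined)}"

definition dual_bdry ::
  "(int \<Rightarrow> 'k set) \<Rightarrow> (int \<Rightarrow> 'k \<Rightarrow> 'k \<Rightarrow> int) \<Rightarrow> (int \<Rightarrow> 'g monoid) \<Rightarrow> (int \<Rightarrow> 'g \<Rightarrow> 'g)
    \<Rightarrow> ((int \<Rightarrow> 'k \<Rightarrow> 'g) \<Rightarrow> complex) \<Rightarrow> ((int \<Rightarrow> 'k \<Rightarrow> 'g) \<Rightarrow> complex)" where
  "dual_bdry K dC G dG m = (\<lambda>f. if f \<in> cochains K G 0 then m (cobdry K dC G dG 0 f) else undefined)"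

text \<open>The Hilbert space: functions on the basis hom(C,G)^0 (|f> is the indicator of f).\<close>
definition Hsp :: "(int \<Rightarrow> 'k set) \<Rightarrow> (int \<Rightarrow> 'g monoid) \<Rightarrow> ((int \<Rightarrow> 'k \<Rightarrow> 'g) \<Rightarrow> complex) set" where
  "Hsp K G = {\<psi>. \<forall>f. f \<notin> cochains K G 0 \<longrightarrow> \<psi> f = 0}"

text \<open>P_t |f> = |f + t>, i.e. (P_t psi)(g) = psi(g - t).\<close>
definition Pop :: "(int \<Rightarrow> 'k set) \<Rightarrow> (int \<Rightarrow> 'g monoid) \<Rightarrow> (int \<Rightarrow> 'k \<Rightarrow> 'g)
    \<Rightarrow> ((int \<Rightarrow> 'k \<Rightarrow> 'g) \<Rightarrow> complex) \<Rightarrow> ((int \<Rightarrow> 'k \<Rightarrow> 'g) \<Rightarrow> complex)" where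
  "Pop K G t \<psi> = (\<lambda>g. if g \<in> cochains K G 0 then \<psi> (cadd K G 0 g (cneg K G 0 t)) else 0)"

text \<open>Q_m |f> = chi_m(f) |f>.\<close>
definition Qop :: "(int \<Rightarrow> 'k set) \<Rightarrow> (int \<Rightarrow> 'g monoid) \<Rightarrow> ((int \<Rightarrow> 'k \<Rightarrow> 'g) \<Rightarrow> complex)
    \<Rightarrow> ((int \<Rightarrow> 'k \<Rightarrow> 'g) \<Rightarrow> complex) \<Rightarrow> ((int \<Rightarrow> 'k \<Rightarrow> 'g) \<Rightarrow> complex)" where
  "Qop K G m \<psi> = (\<lambda>g. if g \<in> cochains K G 0 then m g * \<psi> g else 0)"

definition Aop where "Aop K dC G dG t = Pop K G (cobdry K dC G dG (-1) t)"
definition Bop where "Bop K dC G dG m = Qop K G (dual_bdry K dC G dG m)"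

definition calA where
  "calA K dC G dG s \<psi> = (\<lambda>g. (1 / of_nat (card (cochains K G (-1)))) *
      (\<Sum>t\<in>cochains K G (-1). s t * Aop K dC G dG t \<psi> g))"

definition calB where
  "calB K dC G dG v \<psi> = (\<lambda>g. (1 / of_nat (card (dchains K G 1))) *
      (\<Sum>m\<in>dchains K G 1. m v * Bop K dC G dG m \<psi> g))"

end

theory Submission
  imports Defs
begin

text \<open>
  Everything follows from the character theory of the finite abelian groups \<open>hom(C,G)\<^sup>-\<^sup>1\<close>
  and \<open>hom(C,G)\<^sup>1\<close>. Since \<open>A\<^sub>t |f\<rangle> = |f + \<delta>t\<rangle>\<close>, the operator \<open>\<A>\<^sub>s\<close> is a
  character-weighted average of translations, and translating its argument by \<open>\<delta>t\<close> multiplies it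
  by \<open>cnj (s t)\<close>; the orthogonality relations for characters then give
  \<open>\<A>\<^sub>s \<A>\<^sub>s\<^sub>' = \<delta>(s,s') \<A>\<^sub>s\<close> and \<open>\<Sum>\<^sub>s \<A>\<^sub>s = 1\<close>. Orthogonality for
  \<open>hom(C,G)\<^sup>1\<close> shows that \<open>\<B>\<^sub>v\<close> is the projection onto the states \<open>|f\<rangle>\<close> with
  \<open>\<delta>\<^sup>0 f = -v\<close>, so these projections are orthogonal and sum to \<open>1\<close>. Finally
  \<open>\<delta>\<^sup>0 \<delta>\<^sup>-\<^sup>1 = 0\<close>, so translations by \<open>\<delta>\<^sup>-\<^sup>1 t\<close> do not change \<open>\<delta>\<^sup>0 f\<close>,
  and \<open>\<A>\<^sub>s\<close> commutes with \<open>\<B>\<^sub>v\<close>.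

  Characters of a finite abelian group separate points: a character of a subgroup \<open>H\<close>
  extends to \<open>H\<close> with one more element \<open>g\<close> adjoined by prescribing an \<open>r\<close>-th root of
  its value at \<open>g\<^sup>r\<close>, where \<open>r\<close> is the least positive exponent with \<open>g\<^sup>r \<in> H\<close>.
\<close>

section \<open>Characters of finite abelian groups\<close>

definition character_on :: "('a, 'b) monoid_scheme \<Rightarrow> 'a set \<Rightarrow> ('a \<Rightarrow> complex) \<Rightarrow> bool" where
  "character_on G H \<chi> \<longleftrightarrow>
     (\<forall>x\<in>H. norm (\<chi> x) = 1) \<and> (\<forall>x\<in>H. \<forall>y\<in>H. \<chi> (x \<otimes>\<^bsub>G\<^esub> y) = \<chi> x * \<chi> y)"

definition characters :: "('a, 'b) monoid_scheme \<Rightarrow> ('a \<Rightarrow> complex) set" where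
  "characters G = {\<chi> \<in> extensional (carrier G). character_on G (carrier G) \<chi>}"

definition adjoin :: "('a, 'b) monoid_scheme \<Rightarrow> 'a set \<Rightarrow> 'a \<Rightarrow> 'a set" where
  "adjoin G H g = {x. \<exists>h\<in>H. \<exists>j::nat. x = h \<otimes>\<^bsub>G\<^esub> g [^]\<^bsub>G\<^esub> j}"

locale finite_comm_group = comm_group + assumes finite_carrier: "finite (carrier G)"

lemma unimodular_has_root:
  assumes "norm (z::complex) = 1" "0 < r"
  shows "\<exists>w. w ^ r = z"
proof -
  have "cis (Arg z / r) ^ r = cis (Arg z)" using assms by (simp add: DeMoivre)
  also have "\<dots> = z"
  proof -
    have "z \<noteq> 0" using assms(1) by auto
    then show ?thesis using assms(1) by (simp add: cis_Arg sgn_div_norm)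
  qed
  finally show ?thesis by blast
qed

lemma unimodular_if_power_unimodular:
  assumes "\<omega> ^ r = z" "norm z = 1" "0 < r"
  shows "norm (\<omega>::complex) = 1"
proof -
  have "norm \<omega> ^ r = 1 ^ r" using assms(1,2) by (simp add: norm_power[symmetric])
  then show ?thesis by (rule power_eq_imp_eq_base[OF _ norm_ge_zero _ assms(3)]) simp
qed

lemma unimodular_mult_cnj: "norm (z::complex) = 1 \<Longrightarrow> z * cnj z = 1"
  using complex_norm_square[of z] by simp

lemma (in group) subgroup_nat_pow_closed:
  assumes "subgroup H G" "x \<in> H" shows "x [^] (n::nat) \<in> H"
  using assms by (induction n) (auto simp: subgroup.one_closed subgroup.m_closed)

lemma (in monoid) character_on_one: "character_on G H \<chi> \<Longrightarrow> \<one> \<in> H \<Longrightarrow> \<chi> \<one> = 1"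
proof -
  assume "character_on G H \<chi>" "\<one> \<in> H"
  then have "\<chi> \<one> = \<chi> \<one> * \<chi> \<one>" "\<chi> \<one> \<noteq> 0"
    unfolding character_on_def by (metis l_one one_closed, force)
  then show "\<chi> \<one> = 1" by (metis mult_cancel_right1)
qed

lemma (in group) character_on_pow:
  assumes "character_on G H \<chi>" "subgroup H G" "x \<in> H"
  shows "\<chi> (x [^] (n::nat)) = \<chi> x ^ n"
proof (induction n)
  case 0 then show ?case using assms by (simp add: character_on_one subgroup.one_closed)
next
  case (Suc n)
  then show ?case
    using assms subgroup_nat_pow_closed[OF assms(2,3)] unfolding character_on_def by simp
qed

context finite_comm_group
begin

lemma pow_card_carrier: "g \<in> carrier G \<Longrightarrow> g [^] card (carrier G) = \<one>"
  using power_order_eq_one[OF finite_carrier] .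

lemma inv_nat_pow_eq: "g \<in> carrier G \<Longrightarrow> inv (g [^] (j::nat)) = g [^] (j * (card (carrier G) - 1))"
proof -
  assume g: "g \<in> carrier G"
  define N where "N = card (carrier G)"
  have "0 < N" unfolding N_def using finite_carrier g card_gt_0_iff by auto
  then have "g [^] (j * (N - 1)) \<otimes> g [^] j = g [^] (j * N)"
    using g by (simp add: nat_pow_mult algebra_simps)
  also have "\<dots> = (g [^] N) [^] j" using g by (simp add: nat_pow_pow mult.commute)
  also have "\<dots> = \<one>" using g by (simp add: N_def pow_card_carrier)
  finally show ?thesis using g by (simp add: inv_equality N_def)
qed

lemma least_pow_in_subgroup:
  assumes H: "subgroup H G" and g: "g \<in> carrier G"
  defines "r \<equiv> LEAST k::nat. 0 < k \<and> g [^] k \<in> H"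
  shows "0 < r" and "g [^] r \<in> H" and "g [^] (k::nat) \<in> H \<Longrightarrow> r dvd k"
proof -
  have "0 < card (carrier G) \<and> g [^] card (carrier G) \<in> H"
    using finite_carrier g card_gt_0_iff pow_card_carrier subgroup.one_closed[OF H] by auto
  then have r: "0 < r \<and> g [^] r \<in> H" unfolding r_def by (rule LeastI)
  then show "0 < r" "g [^] r \<in> H" by auto
  assume k: "g [^] k \<in> H"
  show "r dvd k"
  proof (rule ccontr)
    assume "\<not> r dvd k"
    then have "0 < k mod r" "k mod r < r" using r by (auto simp: dvd_eq_mod_eq_0)
    have "(g [^] r) [^] (k div r) \<otimes> g [^] (k mod r) = g [^] (r * (k div r) + k mod r)"
      using g by (simp add: nat_pow_pow nat_pow_mult)
    then have "g [^] k = (g [^] r) [^] (k div r) \<otimes> g [^] (k mod r)" by simp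
    then have "g [^] (k mod r) = inv ((g [^] r) [^] (k div r)) \<otimes> g [^] k"
      using g by (simp add: m_assoc[symmetric] l_inv)
    also have "\<dots> \<in> H"
      using k r subgroup_nat_pow_closed[OF H]
      by (intro subgroup.m_closed[OF H] subgroup.m_inv_closed[OF H]) auto
    finally have "g [^] (k mod r) \<in> H" .
    then show False using not_less_Least[of "k mod r"] \<open>0 < k mod r\<close> \<open>k mod r < r\<close>
      unfolding r_def by blast
  qed
qed

lemma adjoin_mult:
  assumes H: "subgroup H G" and g: "g \<in> carrier G" and h: "h \<in> H" "h' \<in> H"
  shows "(h \<otimes> g [^] (j::nat)) \<otimes> (h' \<otimes> g [^] (j'::nat)) = (h \<otimes> h') \<otimes> g [^] (j + j')"
proof -
  have "h \<in> carrier G" "h' \<in> carrier G" using h subgroup.subset[OF H] by auto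
  then show ?thesis using g by (simp add: nat_pow_mult m_ac add.commute)
qed

lemma subgroup_adjoin:
  assumes H: "subgroup H G" and g: "g \<in> carrier G"
  shows "subgroup (adjoin G H g) G"
proof
  have Hc: "H \<subseteq> carrier G" by (rule subgroup.subset[OF H])
  show "adjoin G H g \<subseteq> carrier G" unfolding adjoin_def using Hc g by auto
next
  fix x y assume x: "x \<in> adjoin G H g" and y: "y \<in> adjoin G H g"
  obtain h j where h: "h \<in> H" "x = h \<otimes> g [^] (j::nat)" using x unfolding adjoin_def by blast
  obtain h' j' where h': "h' \<in> H" "y = h' \<otimes> g [^] (j'::nat)" using y unfolding adjoin_def by blast
  have "x \<otimes> y = (h \<otimes> h') \<otimes> g [^] (j + j')" using adjoin_mult[OF H g h(1) h'(1)] h(2) h'(2) by simp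
  moreover have "h \<otimes> h' \<in> H" using h(1) h'(1) by (rule subgroup.m_closed[OF H])
  ultimately show "x \<otimes> y \<in> adjoin G H g" unfolding adjoin_def by blast
next
  have "\<one> = \<one> \<otimes> g [^] (0::nat)" "\<one> \<in> H" using g by (simp_all add: subgroup.one_closed[OF H])
  then show "\<one> \<in> adjoin G H g" unfolding adjoin_def by blast
next
  fix x assume "x \<in> adjoin G H g"
  then obtain h j where hj: "h \<in> H" "x = h \<otimes> g [^] (j::nat)" unfolding adjoin_def by blast
  have h: "h \<in> carrier G" using hj(1) subgroup.subset[OF H] by auto
  then have "inv x = inv h \<otimes> g [^] (j * (card (carrier G) - 1))"
    using hj g by (simp add: inv_mult inv_nat_pow_eq)
  moreover have "inv h \<in> H" using hj(1) by (rule subgroup.m_inv_closed[OF H])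
  ultimately show "inv x \<in> adjoin G H g" unfolding adjoin_def by blast
qed

lemma subset_adjoin: "subgroup H G \<Longrightarrow> H \<subseteq> adjoin G H g"
proof
  fix h assume "subgroup H G" "h \<in> H"
  then have "h = h \<otimes> g [^] (0::nat)" by (simp add: subgroup.mem_carrier)
  then show "h \<in> adjoin G H g" unfolding adjoin_def using \<open>h \<in> H\<close> by blast
qed

lemma mem_adjoin: "subgroup H G \<Longrightarrow> g \<in> carrier G \<Longrightarrow> g \<in> adjoin G H g"
proof -
  assume "subgroup H G" "g \<in> carrier G"
  then have "g = \<one> \<otimes> g [^] (1::nat)" "\<one> \<in> H" by (simp_all add: subgroup.one_closed)
  then show ?thesis unfolding adjoin_def by blast
qed

text \<open>Writing an element of \<open>adjoin G H g\<close> as \<open>h \<otimes> g [^] j\<close> is unique up to moving a multiple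
  of \<open>r\<close> in \<open>j\<close> into \<open>h\<close>; the choice \<open>\<omega> ^ r = \<chi> (g [^] r)\<close> is exactly what makes
  \<open>\<chi> h * \<omega> ^ j\<close> independent of the representation.\<close>

lemma adjoin_character_well_defined:
  assumes H: "subgroup H G" and ch: "character_on G H \<chi>" and g: "g \<in> carrier G"
  defines "r \<equiv> LEAST k::nat. 0 < k \<and> g [^] k \<in> H"
  assumes w: "\<omega> ^ r = \<chi> (g [^] r)"
    and hh: "h \<in> H" "h' \<in> H" and e: "h \<otimes> g [^] (j::nat) = h' \<otimes> g [^] (j'::nat)"
  shows "\<chi> h * \<omega> ^ j = \<chi> h' * \<omega> ^ j'"
proof -
  have r: "g [^] r \<in> H" using least_pow_in_subgroup(2)[OF H g] unfolding r_def .
  have ordered: "\<chi> h * \<omega> ^ j = \<chi> h' * \<omega> ^ j'"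
    if hh: "h \<in> H" "h' \<in> H" and e: "h \<otimes> g [^] j = h' \<otimes> g [^] j'" and jj: "j' \<le> j"
    for h h' j j'
  proof -
    define d where "d = j - j'"
    have jd: "j = j' + d" using jj d_def by simp
    have hc: "h \<in> carrier G" "h' \<in> carrier G" using hh subgroup.subset[OF H] by auto
    have "(h \<otimes> g [^] d) \<otimes> g [^] j' = h' \<otimes> g [^] j'"
      using e hc g by (simp add: jd nat_pow_mult[symmetric] m_ac)
    then have e2: "h \<otimes> g [^] d = h'" using hc g by (meson m_closed nat_pow_closed right_cancel)
    then have "g [^] d = inv h \<otimes> h'" using hc g by (metis inv_solve_left nat_pow_closed)
    also have "\<dots> \<in> H" using hh H by (simp add: subgroup.m_closed subgroup.m_inv_closed)
    finally have "r dvd d" using least_pow_in_subgroup(3)[OF H g] unfolding r_def by blast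
    then obtain q where q: "d = r * q" by blast
    have "h' = h \<otimes> (g [^] r) [^] q" using e2 g by (simp add: q nat_pow_pow)
    then have "\<chi> h' = \<chi> h * \<chi> (g [^] r) ^ q"
      using ch hh r subgroup_nat_pow_closed[OF H r] character_on_pow[OF ch H r]
      unfolding character_on_def by simp
    also have "\<dots> = \<chi> h * \<omega> ^ d" by (simp add: q w[symmetric] power_mult)
    finally show ?thesis by (simp add: jd power_add)
  qed
  show ?thesis using ordered[OF hh e] ordered[OF hh(2,1) e[symmetric]] by (cases "j' \<le> j") auto
qed

lemma character_on_adjoin:
  assumes H: "subgroup H G" and ch: "character_on G H \<chi>" and g: "g \<in> carrier G"
  defines "r \<equiv> LEAST k::nat. 0 < k \<and> g [^] k \<in> H"
  assumes w: "\<omega> ^ r = \<chi> (g [^] r)"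
  shows "\<exists>\<chi>'. character_on G (adjoin G H g) \<chi>' \<and> (\<forall>x\<in>H. \<chi>' x = \<chi> x) \<and> \<chi>' g = \<omega>"
proof -
  have r: "0 < r" "g [^] r \<in> H" using least_pow_in_subgroup(1,2)[OF H g] unfolding r_def by auto
  have nw: "norm \<omega> = 1"
    using unimodular_if_power_unimodular[OF w _ r(1)] ch r(2) unfolding character_on_def by simp
  define \<chi>' where "\<chi>' x = (SOME v. \<exists>h\<in>H. \<exists>j::nat. x = h \<otimes> g [^] j \<and> v = \<chi> h * \<omega> ^ j)" for x
  have \<chi>': "\<chi>' (h \<otimes> g [^] j) = \<chi> h * \<omega> ^ j" if "h \<in> H" for h j
    unfolding \<chi>'_def
  proof (rule someI2[where a="\<chi> h * \<omega> ^ j"])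
    show "\<exists>h'\<in>H. \<exists>j'::nat. h \<otimes> g [^] j = h' \<otimes> g [^] j' \<and> \<chi> h * \<omega> ^ j = \<chi> h' * \<omega> ^ j'"
      using that by blast
  next
    fix v assume "\<exists>h'\<in>H. \<exists>j'::nat. h \<otimes> g [^] j = h' \<otimes> g [^] j' \<and> v = \<chi> h' * \<omega> ^ j'"
    then obtain h' j' where "h' \<in> H" "h \<otimes> g [^] j = h' \<otimes> g [^] (j'::nat)" "v = \<chi> h' * \<omega> ^ j'"
      by blast
    then show "v = \<chi> h * \<omega> ^ j"
      using adjoin_character_well_defined[OF H ch g w[unfolded r_def] that] by simp
  qed
  have "character_on G (adjoin G H g) \<chi>'"
    unfolding character_on_def
  proof (intro conjI ballI)
    fix x assume "x \<in> adjoin G H g"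
    then obtain h j where "h \<in> H" "x = h \<otimes> g [^] (j::nat)" unfolding adjoin_def by blast
    then show "norm (\<chi>' x) = 1" using \<chi>' ch nw unfolding character_on_def by (simp add: norm_mult norm_power)
  next
    fix x y assume x: "x \<in> adjoin G H g" and y: "y \<in> adjoin G H g"
    obtain h j where h: "h \<in> H" "x = h \<otimes> g [^] (j::nat)" using x unfolding adjoin_def by blast
    obtain h' j' where h': "h' \<in> H" "y = h' \<otimes> g [^] (j'::nat)" using y unfolding adjoin_def by blast
    have "x \<otimes> y = (h \<otimes> h') \<otimes> g [^] (j + j')" using adjoin_mult[OF H g h(1) h'(1)] h(2) h'(2) by simp
    moreover have "h \<otimes> h' \<in> H" using h(1) h'(1) by (rule subgroup.m_closed[OF H])
    ultimately show "\<chi>' (x \<otimes> y) = \<chi>' x * \<chi>' y"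
      using \<chi>' h h' ch unfolding character_on_def by (simp add: power_add)
  qed
  moreover have "\<chi>' h = \<chi> h" if "h \<in> H" for h
    using \<chi>'[OF that, of 0] that subgroup.mem_carrier[OF H] by simp
  moreover have "\<chi>' g = \<omega>"
    using \<chi>'[OF subgroup.one_closed[OF H], of 1] g character_on_one[OF ch subgroup.one_closed[OF H]]
    by simp
  ultimately show ?thesis by blast
qed

lemma character_extends:
  assumes "subgroup H G" "character_on G H \<chi>"
  shows "\<exists>\<chi>'. character_on G (carrier G) \<chi>' \<and> (\<forall>x\<in>H. \<chi>' x = \<chi> x)"
  using assms
proof (induction "card (carrier G) - card H" arbitrary: H \<chi> rule: less_induct)
  case less
  note H = less.prems(1) and ch = less.prems(2)
  show ?case
  proof (cases "H = carrier G")
    case True then show ?thesis using ch by auto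
  next
    case False
    have Hc: "H \<subseteq> carrier G" by (rule subgroup.subset[OF H])
    then obtain g where g: "g \<in> carrier G" "g \<notin> H" using False by blast
    define r where "r = (LEAST k::nat. 0 < k \<and> g [^] k \<in> H)"
    have "norm (\<chi> (g [^] r)) = 1"
      using ch least_pow_in_subgroup(2)[OF H g(1)] unfolding character_on_def r_def by blast
    moreover have "0 < r" using least_pow_in_subgroup(1)[OF H g(1)] unfolding r_def .
    ultimately obtain \<omega> where "\<omega> ^ r = \<chi> (g [^] r)" using unimodular_has_root by blast
    then obtain \<chi>' where \<chi>': "character_on G (adjoin G H g) \<chi>'" "\<forall>x\<in>H. \<chi>' x = \<chi> x"
      using character_on_adjoin[OF H ch g(1)] unfolding r_def by blast
    have H': "subgroup (adjoin G H g) G" by (rule subgroup_adjoin[OF H g(1)])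
    have "card H < card (adjoin G H g)"
      using subset_adjoin[OF H] mem_adjoin[OF H g(1)] g(2) subgroup.subset[OF H'] finite_carrier
      by (intro psubset_card_mono) (auto intro: finite_subset)
    moreover have "card (adjoin G H g) \<le> card (carrier G)"
      using subgroup.subset[OF H'] finite_carrier by (simp add: card_mono)
    ultimately have "card (carrier G) - card (adjoin G H g) < card (carrier G) - card H" by linarith
    then obtain \<chi>'' where \<chi>'': "character_on G (carrier G) \<chi>''" "\<forall>x\<in>adjoin G H g. \<chi>'' x = \<chi>' x"
      using less.hyps[OF _ H' \<chi>'(1)] by blast
    have "\<forall>x\<in>H. \<chi>'' x = \<chi> x" using \<chi>'(2) \<chi>''(2) subset_adjoin[of H g, OF H] by auto
    with \<chi>''(1) show ?thesis by blast
  qed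
qed

lemma ex_character_ne_one:
  assumes a: "a \<in> carrier G" "a \<noteq> \<one>"
  shows "\<exists>\<chi>. character_on G (carrier G) \<chi> \<and> \<chi> a \<noteq> 1"
proof -
  have H: "subgroup {\<one>} G" by (rule triv_subgroup)
  have ch: "character_on G {\<one>} (\<lambda>_. 1)" unfolding character_on_def by simp
  define r where "r = (LEAST k::nat. 0 < k \<and> a [^] k \<in> {\<one>})"
  have "0 < r" "a [^] r = \<one>" using least_pow_in_subgroup(1,2)[OF H a(1)] unfolding r_def by auto
  moreover have "r \<noteq> 1" using \<open>a [^] r = \<one>\<close> a by auto
  ultimately have "2 \<le> r" by linarith
  have "\<not> {z::complex. z ^ r = 1} \<subseteq> {1}"
  proof
    assume "{z::complex. z ^ r = 1} \<subseteq> {1}"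
    then have "card {z::complex. z ^ r = 1} \<le> 1" using card_mono[of "{1}" "{z::complex. z ^ r = 1}"] by simp
    then show False using card_roots_unity_eq[of r] \<open>2 \<le> r\<close> by simp
  qed
  then obtain \<omega> :: complex where w: "\<omega> ^ r = 1" "\<omega> \<noteq> 1" by blast
  obtain \<chi>' where \<chi>': "character_on G (adjoin G {\<one>} a) \<chi>'" "\<chi>' a = \<omega>"
    using character_on_adjoin[OF H ch a(1), of \<omega>] w(1) unfolding r_def by auto
  obtain \<chi> where "character_on G (carrier G) \<chi>" "\<forall>x\<in>adjoin G {\<one>} a. \<chi> x = \<chi>' x"
    using character_extends[OF subgroup_adjoin[OF H a(1)] \<chi>'(1)] by blast
  then show ?thesis using mem_adjoin[OF H a(1)] \<chi>'(2) w(2) by auto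
qed

lemma character_norm: "\<chi> \<in> characters G \<Longrightarrow> x \<in> carrier G \<Longrightarrow> norm (\<chi> x) = 1"
  unfolding characters_def character_on_def by blast

lemma character_mult:
  "\<chi> \<in> characters G \<Longrightarrow> x \<in> carrier G \<Longrightarrow> y \<in> carrier G \<Longrightarrow> \<chi> (x \<otimes> y) = \<chi> x * \<chi> y"
  unfolding characters_def character_on_def by blast

lemma character_one: "\<chi> \<in> characters G \<Longrightarrow> \<chi> \<one> = 1"
  unfolding characters_def by (auto intro: character_on_one)

lemma character_mult_cnj: "\<chi> \<in> characters G \<Longrightarrow> x \<in> carrier G \<Longrightarrow> \<chi> x * cnj (\<chi> x) = 1"
  by (simp add: character_norm unimodular_mult_cnj)

lemma character_cnj_mult: "\<chi> \<in> characters G \<Longrightarrow> x \<in> carrier G \<Longrightarrow> cnj (\<chi> x) * \<chi> x = 1"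
  by (simp add: character_mult_cnj mult.commute)

lemma character_inv:
  assumes "\<chi> \<in> characters G" "x \<in> carrier G"
  shows "\<chi> (inv x) = cnj (\<chi> x)"
proof -
  have "\<chi> x * \<chi> (inv x) = \<chi> x * cnj (\<chi> x)"
    using assms character_mult[OF assms(1), of x "inv x"] by (simp add: character_one character_mult_cnj)
  moreover have "\<chi> x \<noteq> 0" using character_norm[OF assms] by auto
  ultimately show ?thesis by simp
qed

lemma characters_eqI:
  "\<chi> \<in> characters G \<Longrightarrow> \<chi>' \<in> characters G \<Longrightarrow> (\<And>x. x \<in> carrier G \<Longrightarrow> \<chi> x = \<chi>' x) \<Longrightarrow> \<chi> = \<chi>'"
  unfolding characters_def by (auto intro: extensionalityI)

lemma trivial_character: "restrict (\<lambda>_. 1) (carrier G) \<in> characters G"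
  unfolding characters_def character_on_def by auto

lemma character_restrict_mult:
  assumes "\<chi> \<in> characters G" "\<chi>' \<in> characters G"
  shows "restrict (\<lambda>x. \<chi> x * \<chi>' x) (carrier G) \<in> characters G"
  using assms unfolding characters_def character_on_def by (auto simp: norm_mult)

lemma character_restrict_cnj_mult:
  assumes "\<chi> \<in> characters G" "\<chi>' \<in> characters G"
  shows "restrict (\<lambda>x. cnj (\<chi> x) * \<chi>' x) (carrier G) \<in> characters G"
  using assms unfolding characters_def character_on_def by (auto simp: norm_mult)

lemma finite_characters: "finite (characters G)"
proof -
  define N where "N = card (carrier G)"
  have "0 < N" unfolding N_def using finite_carrier card_gt_0_iff by auto
  have "\<chi> x ^ N = 1" if "\<chi> \<in> characters G" "x \<in> carrier G" for \<chi> x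
  proof -
    have "\<chi> x ^ N = \<chi> (x [^] N)"
      using that character_on_pow[of "carrier G" \<chi> x N] subgroup_self
      unfolding characters_def by auto
    then show ?thesis using that by (simp add: N_def pow_card_carrier character_one)
  qed
  then have "characters G \<subseteq> PiE (carrier G) (\<lambda>_. {z. z ^ N = 1})"
    unfolding characters_def by (auto simp: PiE_def)
  moreover have "finite (PiE (carrier G) (\<lambda>_. {z::complex. z ^ N = 1}))"
    using finite_carrier finite_roots_unity \<open>0 < N\<close> by (intro finite_PiE) auto
  ultimately show ?thesis by (rule finite_subset)
qed

lemma sum_left_translate:
  assumes "y \<in> carrier G"
  shows "(\<Sum>x\<in>carrier G. f (y \<otimes> x)) = (\<Sum>x\<in>carrier G. f x)"
proof -
  have "bij_betw (\<lambda>x. y \<otimes> x) (carrier G) (carrier G)"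
    unfolding bij_betw_def using inj_on_cmult[OF assms] surj_const_mult[OF assms] by blast
  then show ?thesis by (rule sum.reindex_bij_betw)
qed

text \<open>Both orthogonality relations follow from the same trick: a sum that is invariant under
  multiplication by a factor \<open>c \<noteq> 1\<close> vanishes.\<close>

lemma character_orthogonality:
  assumes \<chi>: "\<chi> \<in> characters G" and \<chi>': "\<chi>' \<in> characters G"
  shows "(\<Sum>x\<in>carrier G. \<chi> x * cnj (\<chi>' x)) = (if \<chi> = \<chi>' then of_nat (card (carrier G)) else 0)"
proof (cases "\<chi> = \<chi>'")
  case True
  then show ?thesis using character_mult_cnj[OF \<chi>'] by simp
next
  case False
  then obtain y where y: "y \<in> carrier G" "\<chi> y \<noteq> \<chi>' y" using characters_eqI[OF \<chi> \<chi>'] by blast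
  define c where "c = \<chi> y * cnj (\<chi>' y)"
  have "c \<noteq> 1"
  proof
    assume "c = 1"
    then have "\<chi> y * (cnj (\<chi>' y) * \<chi>' y) = \<chi>' y" unfolding c_def by (metis mult.assoc mult_1)
    then show False using y character_mult_cnj[OF \<chi>' y(1)] by (simp add: mult.commute)
  qed
  define S where "S = (\<Sum>x\<in>carrier G. \<chi> x * cnj (\<chi>' x))"
  have "S = (\<Sum>x\<in>carrier G. \<chi> (y \<otimes> x) * cnj (\<chi>' (y \<otimes> x)))"
    unfolding S_def by (rule sum_left_translate[OF y(1), symmetric])
  also have "\<dots> = (\<Sum>x\<in>carrier G. c * (\<chi> x * cnj (\<chi>' x)))"
    using character_mult[OF \<chi>] character_mult[OF \<chi>'] y(1) by (intro sum.cong) (auto simp: c_def)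
  also have "\<dots> = c * S" unfolding S_def by (simp add: sum_distrib_left)
  finally have "(1 - c) * S = 0" by (simp add: algebra_simps)
  then show ?thesis using False \<open>c \<noteq> 1\<close> S_def by simp
qed

lemma bij_betw_mult_character:
  assumes \<psi>: "\<psi> \<in> characters G"
  shows "bij_betw (\<lambda>\<chi>. restrict (\<lambda>y. \<psi> y * \<chi> y) (carrier G)) (characters G) (characters G)"
proof (rule bij_betw_byWitness[where f'="\<lambda>\<chi>. restrict (\<lambda>y. cnj (\<psi> y) * \<chi> y) (carrier G)"])
  show "\<forall>\<chi>\<in>characters G.
      restrict (\<lambda>y. cnj (\<psi> y) * restrict (\<lambda>y. \<psi> y * \<chi> y) (carrier G) y) (carrier G) = \<chi>"
  proof
    fix \<chi> assume \<chi>: "\<chi> \<in> characters G"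
    show "restrict (\<lambda>y. cnj (\<psi> y) * restrict (\<lambda>y. \<psi> y * \<chi> y) (carrier G) y) (carrier G) = \<chi>"
      using \<chi> \<psi> character_cnj_mult[OF \<psi>]
      by (intro characters_eqI character_restrict_cnj_mult character_restrict_mult)
        (simp_all add: mult.assoc[symmetric])
  qed
  show "\<forall>\<chi>\<in>characters G.
      restrict (\<lambda>y. \<psi> y * restrict (\<lambda>y. cnj (\<psi> y) * \<chi> y) (carrier G) y) (carrier G) = \<chi>"
  proof
    fix \<chi> assume \<chi>: "\<chi> \<in> characters G"
    show "restrict (\<lambda>y. \<psi> y * restrict (\<lambda>y. cnj (\<psi> y) * \<chi> y) (carrier G) y) (carrier G) = \<chi>"
      using \<chi> \<psi> character_mult_cnj[OF \<psi>]
      by (intro characters_eqI character_restrict_cnj_mult character_restrict_mult)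
        (simp_all add: mult.assoc[symmetric])
  qed
qed (use \<psi> character_restrict_mult character_restrict_cnj_mult in blast)+

lemma sum_characters:
  assumes x: "x \<in> carrier G"
  shows "(\<Sum>\<chi>\<in>characters G. \<chi> x) = (if x = \<one> then of_nat (card (characters G)) else 0)"
proof (cases "x = \<one>")
  case True
  then show ?thesis by (simp add: character_one)
next
  case False
  obtain \<psi> where \<psi>: "\<psi> \<in> characters G" "\<psi> x \<noteq> 1"
  proof -
    obtain \<chi> where "character_on G (carrier G) \<chi>" "\<chi> x \<noteq> 1"
      using ex_character_ne_one[OF x False] by blast
    then show thesis
      using that[of "restrict \<chi> (carrier G)"] x unfolding characters_def character_on_def by simp
  qed
  have "(\<Sum>\<chi>\<in>characters G. \<chi> x) = (\<Sum>\<chi>\<in>characters G. restrict (\<lambda>y. \<psi> y * \<chi> y) (carrier G) x)"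
    by (rule sum.reindex_bij_betw[OF bij_betw_mult_character[OF \<psi>(1)], symmetric])
  also have "\<dots> = \<psi> x * (\<Sum>\<chi>\<in>characters G. \<chi> x)" using x by (simp add: sum_distrib_left)
  finally have "(1 - \<psi> x) * (\<Sum>\<chi>\<in>characters G. \<chi> x) = 0" by (simp add: algebra_simps)
  then show ?thesis using False \<psi>(2) by simp
qed

lemma card_characters: "card (characters G) = card (carrier G)"
proof -
  define triv where "triv = restrict (\<lambda>_. 1::complex) (carrier G)"
  have "(of_nat (card (characters G)) :: complex) = (\<Sum>x\<in>carrier G. \<Sum>\<chi>\<in>characters G. \<chi> x)"
    by (simp add: sum_characters sum.delta finite_carrier)
  also have "\<dots> = (\<Sum>\<chi>\<in>characters G. \<Sum>x\<in>carrier G. \<chi> x * cnj (triv x))"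
    by (subst sum.swap) (simp add: triv_def)
  also have "\<dots> = (\<Sum>\<chi>\<in>characters G. if \<chi> = triv then of_nat (card (carrier G)) else 0)"
    using character_orthogonality[OF _ trivial_character[folded triv_def]] by (intro sum.cong) auto
  also have "\<dots> = of_nat (card (carrier G))"
    using trivial_character finite_characters by (simp add: triv_def)
  finally show ?thesis by (simp only: of_nat_eq_iff)
qed

end

section \<open>Finite products in abelian groups\<close>

lemma (in comm_group) finprod_int_pow:
  assumes "finite A" "f \<in> A \<rightarrow> carrier G"
  shows "(finprod G f A) [^] (k::int) = finprod G (\<lambda>y. f y [^] k) A"
  using assms
proof (induction A rule: finite_induct)
  case empty then show ?case by simp
next
  case (insert a A)
  then have fa: "f a \<in> carrier G" and fA: "f \<in> A \<rightarrow> carrier G" by auto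
  have "finprod G f (insert a A) [^] k = f a [^] k \<otimes> finprod G f A [^] k"
    using insert fa fA by (simp add: int_pow_distrib)
  also have "\<dots> = finprod G (\<lambda>y. f y [^] k) (insert a A)"
    using insert fa fA by (subst finprod_insert) (auto simp: Pi_def)
  finally show ?case .
qed

lemma (in comm_group) finprod_mult_int_pow:
  assumes "a \<in> A \<rightarrow> carrier G" "b \<in> A \<rightarrow> carrier G"
  shows "finprod G (\<lambda>y. (a y \<otimes> b y) [^] (c y :: int)) A
    = finprod G (\<lambda>y. a y [^] c y) A \<otimes> finprod G (\<lambda>y. b y [^] c y) A"
proof -
  have "finprod G (\<lambda>y. (a y \<otimes> b y) [^] c y) A = finprod G (\<lambda>y. a y [^] c y \<otimes> b y [^] c y) A"
    using assms by (intro finprod_cong') (auto simp: Pi_def int_pow_distrib)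
  then show ?thesis using assms by (simp add: Pi_def)
qed

lemma (in comm_group) finprod_int_pow_sum:
  assumes "finite A" "a \<in> carrier G"
  shows "finprod G (\<lambda>y. a [^] (c y :: int)) A = a [^] (\<Sum>y\<in>A. c y)"
  using assms(1)
proof (induction A rule: finite_induct)
  case empty then show ?case by simp
next
  case (insert x A)
  then have "finprod G (\<lambda>y. a [^] (c y :: int)) (insert x A) = a [^] (c x + (\<Sum>y\<in>A. c y))"
    using assms(2) by (subst finprod_insert) (auto simp: Pi_def int_pow_mult)
  then show ?case using insert by simp
qed

lemma (in comm_group) finprod_swap:
  assumes "finite A" "finite B" "\<And>y z. y \<in> A \<Longrightarrow> z \<in> B \<Longrightarrow> f y z \<in> carrier G"
  shows "finprod G (\<lambda>y. finprod G (\<lambda>z. f y z) B) A = finprod G (\<lambda>z. finprod G (\<lambda>y. f y z) A) B"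
  using assms
proof (induction A rule: finite_induct)
  case empty then show ?case by simp
next
  case (insert a A)
  have c1: "(\<lambda>z. f a z) \<in> B \<rightarrow> carrier G" using insert.prems by auto
  have c2: "(\<lambda>z. finprod G (\<lambda>y. f y z) A) \<in> B \<rightarrow> carrier G"
    using insert.prems by (auto intro!: finprod_closed simp: Pi_def)
  have "finprod G (\<lambda>y. finprod G (\<lambda>z. f y z) B) (insert a A)
      = finprod G (\<lambda>z. f a z) B \<otimes> finprod G (\<lambda>z. finprod G (\<lambda>y. f y z) A) B"
    using insert by (subst finprod_insert) (auto simp: Pi_def)
  also have "\<dots> = finprod G (\<lambda>z. f a z \<otimes> finprod G (\<lambda>y. f y z) A) B"
    using c1 c2 by (simp add: finprod_multf)
  also have "\<dots> = finprod G (\<lambda>z. finprod G (\<lambda>y. f y z) (insert a A)) B"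
    using insert by (intro finprod_cong') (auto simp: Pi_def)
  finally show ?case .
qed

text \<open>The multiplicative form of the dual of \<open>\<partial> \<circ> \<partial> = 0\<close>.\<close>

lemma (in comm_group) finprod_finprod_pow_eq_one:
  assumes "finite A" "finite B" "a \<in> B \<rightarrow> carrier G"
    and "\<And>z. z \<in> B \<Longrightarrow> (\<Sum>y\<in>A. c y * d y z) = 0"
  shows "finprod G (\<lambda>y. finprod G (\<lambda>z. a z [^] (d y z :: int)) B [^] (c y :: int)) A = \<one>"
proof -
  have "finprod G (\<lambda>y. finprod G (\<lambda>z. a z [^] d y z) B [^] c y) A
      = finprod G (\<lambda>y. finprod G (\<lambda>z. a z [^] (d y z * c y)) B) A"
  proof (intro finprod_cong')
    fix y assume "y \<in> A"
    show "finprod G (\<lambda>z. a z [^] d y z) B [^] c y = finprod G (\<lambda>z. a z [^] (d y z * c y)) B"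
      using assms(2,3) by (subst finprod_int_pow) (auto simp: Pi_def int_pow_pow intro!: finprod_cong')
  qed (use assms(3) in \<open>auto intro!: finprod_closed simp: Pi_def\<close>)
  also have "\<dots> = finprod G (\<lambda>z. finprod G (\<lambda>y. a z [^] (d y z * c y)) A) B"
    using assms(1-3) by (intro finprod_swap) auto
  also have "\<dots> = finprod G (\<lambda>z. \<one>) B"
  proof (intro finprod_cong')
    fix z assume z: "z \<in> B"
    have "(\<Sum>y\<in>A. d y z * c y) = 0" using assms(4)[OF z] by (simp add: mult.commute)
    then show "finprod G (\<lambda>y. a z [^] (d y z * c y)) A = \<one>"
      using z assms(1,3) by (simp add: finprod_int_pow_sum Pi_def)
  qed auto
  finally show ?thesis by simp
qed

lemma comm_group_hom_finprod:
  assumes G: "comm_group G" and H: "comm_group H" and h: "h \<in> hom G H"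
    and A: "finite A" and f: "f \<in> A \<rightarrow> carrier G"
  shows "h (finprod G f A) = finprod H (\<lambda>y. h (f y)) A"
proof -
  interpret G: comm_group G by (rule G)
  interpret H: comm_group H by (rule H)
  interpret group_hom G H h
    using G H h by (simp add: group_hom_def group_hom_axioms_def comm_group.axioms(2))
  have [simp]: "x \<in> carrier G \<Longrightarrow> h x \<in> carrier H" for x by (rule hom_closed)
  show ?thesis
    using A f
  proof (induction A rule: finite_induct)
    case (insert a A)
    have fa: "f a \<in> carrier G" and fA: "f \<in> A \<rightarrow> carrier G" using insert.prems by auto
    have "h (finprod G f (insert a A)) = h (f a) \<otimes>\<^bsub>H\<^esub> h (finprod G f A)"
      using insert fa fA by simp
    also have "\<dots> = finprod H (\<lambda>y. h (f y)) (insert a A)"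
      using insert fa fA by (subst H.finprod_insert) (auto simp: Pi_def)
    finally show ?case .
  qed simp
qed

section \<open>The cochain groups\<close>

definition czero :: "(int \<Rightarrow> 'k set) \<Rightarrow> (int \<Rightarrow> 'g monoid) \<Rightarrow> int \<Rightarrow> (int \<Rightarrow> 'k \<Rightarrow> 'g)" where
  "czero K G p = (\<lambda>n x. if x \<in> K n then \<one>\<^bsub>G (n - p)\<^esub> else undefined)"

definition cochain_group :: "(int \<Rightarrow> 'k set) \<Rightarrow> (int \<Rightarrow> 'g monoid) \<Rightarrow> int \<Rightarrow> (int \<Rightarrow> 'k \<Rightarrow> 'g) monoid" where
  "cochain_group K G p = \<lparr>carrier = cochains K G p, monoid.mult = cadd K G p, one = czero K G p\<rparr>"

locale cochain_setting =
  fixes K :: "int \<Rightarrow> 'k set" and dC :: "int \<Rightarrow> 'k \<Rightarrow> 'k \<Rightarrow> int"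
    and G :: "int \<Rightarrow> 'g monoid" and dG :: "int \<Rightarrow> 'g \<Rightarrow> 'g"
  assumes setting: "setting K dC G dG"
begin

abbreviation CG :: "int \<Rightarrow> (int \<Rightarrow> 'k \<Rightarrow> 'g) monoid" where "CG p \<equiv> cochain_group K G p"
abbreviation \<delta> :: "int \<Rightarrow> (int \<Rightarrow> 'k \<Rightarrow> 'g) \<Rightarrow> (int \<Rightarrow> 'k \<Rightarrow> 'g)" where "\<delta> p \<equiv> cobdry K dC G dG p"

lemma finite_K: "finite (K n)"
  using setting unfolding setting_def by blast

lemma finite_degrees: "finite {n. K n \<noteq> {}}"
  using setting unfolding setting_def by blast

lemma comm_group_G: "comm_group (G n)"
  using setting unfolding setting_def by blast

lemma group_G: "group (G n)"
  using comm_group_G by (rule comm_group.axioms(2))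

lemma monoid_G: "monoid (G n)"
  using group_G by (rule group.axioms(1))

lemma finite_G: "finite (carrier (G n))"
  using setting unfolding setting_def by blast

lemma dG_hom: "q = n - 1 \<Longrightarrow> dG n \<in> hom (G n) (G q)"
  using setting unfolding setting_def by blast

lemma dG_closed: "q = n - 1 \<Longrightarrow> a \<in> carrier (G n) \<Longrightarrow> dG n a \<in> carrier (G q)"
  using dG_hom by (auto simp: hom_def Pi_def)

lemma dG_dG: "a \<in> carrier (G n) \<Longrightarrow> dG (n - 1) (dG n a) = \<one>\<^bsub>G (n - 2)\<^esub>"
  using setting unfolding setting_def by blast

lemma dC_dC: "x \<in> K n \<Longrightarrow> z \<in> K (n - 2) \<Longrightarrow> (\<Sum>y\<in>K (n - 1). dC n x y * dC (n - 1) y z) = 0"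
  using setting unfolding setting_def by blast

lemma cochainsD:
  "f \<in> cochains K G p \<Longrightarrow> x \<in> K n \<Longrightarrow> f n x \<in> carrier (G (n - p))"
  "f \<in> cochains K G p \<Longrightarrow> x \<notin> K n \<Longrightarrow> f n x = undefined"
  unfolding cochains_def by auto

lemma cochains_eqI:
  assumes "f \<in> cochains K G p" "g \<in> cochains K G p" "\<And>n x. x \<in> K n \<Longrightarrow> f n x = g n x"
  shows "f = g"
proof (intro ext)
  fix n x show "f n x = g n x"
    using assms cochainsD(2)[OF assms(1)] cochainsD(2)[OF assms(2)] by (cases "x \<in> K n") simp_all
qed

lemma cadd_closed: "f \<in> cochains K G p \<Longrightarrow> g \<in> cochains K G p \<Longrightarrow> cadd K G p f g \<in> cochains K G p"
  unfolding cochains_def cadd_def by (auto intro: monoid.m_closed[OF monoid_G])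

lemma czero_closed: "czero K G p \<in> cochains K G p"
  unfolding cochains_def czero_def by (auto intro: monoid.one_closed[OF monoid_G])

lemma cneg_closed: "f \<in> cochains K G p \<Longrightarrow> cneg K G p f \<in> cochains K G p"
  unfolding cochains_def cneg_def by (auto intro: group.inv_closed[OF group_G])

lemma cochain_group_simps:
  "carrier (CG p) = cochains K G p" "monoid.mult (CG p) = cadd K G p" "one (CG p) = czero K G p"
  unfolding cochain_group_def by simp_all

lemma cadd_czero:
  assumes f: "f \<in> cochains K G p"
  shows "cadd K G p (czero K G p) f = f"
  by (rule cochains_eqI[OF cadd_closed[OF czero_closed f] f])
    (simp add: cadd_def czero_def cochainsD[OF f] monoid.l_one[OF monoid_G])

lemma cadd_cneg:
  assumes f: "f \<in> cochains K G p"
  shows "cadd K G p (cneg K G p f) f = czero K G p"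
  by (rule cochains_eqI[OF cadd_closed[OF cneg_closed[OF f] f] czero_closed])
    (simp add: cadd_def czero_def cneg_def cochainsD[OF f] group.l_inv[OF group_G])

lemma comm_group_cochain_group: "comm_group (CG p)"
proof (rule comm_groupI)
  fix f g h assume "f \<in> carrier (CG p)" "g \<in> carrier (CG p)" "h \<in> carrier (CG p)"
  then have f: "f \<in> cochains K G p" and g: "g \<in> cochains K G p" and h: "h \<in> cochains K G p"
    by (simp_all add: cochain_group_simps)
  have "f \<otimes>\<^bsub>CG p\<^esub> g \<otimes>\<^bsub>CG p\<^esub> h \<in> cochains K G p" "f \<otimes>\<^bsub>CG p\<^esub> (g \<otimes>\<^bsub>CG p\<^esub> h) \<in> cochains K G p"
    using f g h by (simp_all add: cochain_group_simps cadd_closed)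
  then show "f \<otimes>\<^bsub>CG p\<^esub> g \<otimes>\<^bsub>CG p\<^esub> h = f \<otimes>\<^bsub>CG p\<^esub> (g \<otimes>\<^bsub>CG p\<^esub> h)"
    by (rule cochains_eqI) (use f g h in \<open>simp add: cochain_group_simps cadd_def cochainsD monoid.m_assoc[OF monoid_G]\<close>)
next
  fix f g assume "f \<in> carrier (CG p)" "g \<in> carrier (CG p)"
  then have f: "f \<in> cochains K G p" and g: "g \<in> cochains K G p" by (simp_all add: cochain_group_simps)
  have "f \<otimes>\<^bsub>CG p\<^esub> g \<in> cochains K G p" "g \<otimes>\<^bsub>CG p\<^esub> f \<in> cochains K G p"
    using f g by (simp_all add: cochain_group_simps cadd_closed)
  then show "f \<otimes>\<^bsub>CG p\<^esub> g = g \<otimes>\<^bsub>CG p\<^esub> f"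
    by (rule cochains_eqI) (use f g in \<open>simp add: cochain_group_simps cadd_def cochainsD comm_monoid.m_comm[OF comm_group.axioms(1)[OF comm_group_G]]\<close>)
next
  fix f assume "f \<in> carrier (CG p)"
  then have "cneg K G p f \<in> carrier (CG p)" "cneg K G p f \<otimes>\<^bsub>CG p\<^esub> f = \<one>\<^bsub>CG p\<^esub>"
    by (simp_all add: cochain_group_simps cneg_closed cadd_cneg)
  then show "\<exists>g\<in>carrier (CG p). g \<otimes>\<^bsub>CG p\<^esub> f = \<one>\<^bsub>CG p\<^esub>" by blast
qed (simp_all add: cochain_group_simps cadd_closed czero_closed cadd_czero)

lemma cochain_group_inv: "f \<in> cochains K G p \<Longrightarrow> inv\<^bsub>CG p\<^esub> f = cneg K G p f"
  using comm_group.axioms(2)[OF comm_group_cochain_group, THEN group.inv_equality]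
  by (simp add: cochain_group_simps cadd_cneg cneg_closed)

text \<open>A cochain is determined by its values on the finitely many basis elements.\<close>

lemma finite_cochains: "finite (cochains K G p)"
proof -
  define I where "I = (SIGMA n:{n. K n \<noteq> {}}. K n)"
  define F where "F f = (\<lambda>(n, x)\<in>I. f n x)" for f :: "int \<Rightarrow> 'k \<Rightarrow> 'g"
  have "inj_on F (cochains K G p)"
  proof (rule inj_onI)
    fix f g assume f: "f \<in> cochains K G p" and g: "g \<in> cochains K G p" and "F f = F g"
    show "f = g"
    proof (rule cochains_eqI[OF f g])
      fix n x assume "x \<in> K n"
      then have "(n, x) \<in> I" unfolding I_def by auto
      then show "f n x = g n x" using fun_cong[OF \<open>F f = F g\<close>, of "(n, x)"] unfolding F_def by simp
    qed
  qed
  moreover have "F ` cochains K G p \<subseteq> PiE I (\<lambda>(n, x). carrier (G (n - p)))"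
  proof
    fix h assume "h \<in> F ` cochains K G p"
    then obtain f where f: "f \<in> cochains K G p" "h = F f" by blast
    show "h \<in> PiE I (\<lambda>(n, x). carrier (G (n - p)))"
      unfolding f(2) F_def
    proof (rule PiE_I)
      fix nx assume "nx \<in> I"
      then show "(\<lambda>(n, x)\<in>I. f n x) nx \<in> (\<lambda>(n, x). carrier (G (n - p))) nx"
        unfolding I_def using cochainsD(1)[OF f(1)] by auto
    qed simp
  qed
  moreover have "finite (PiE I (\<lambda>(n, x). carrier (G (n - p))))"
    unfolding I_def using finite_degrees finite_K finite_G by (intro finite_PiE finite_SigmaI) auto
  ultimately show ?thesis by (meson finite_imageD finite_subset)
qed

lemma finite_comm_group_cochain_group: "finite_comm_group (CG p)"
  unfolding finite_comm_group_def finite_comm_group_axioms_def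
  using comm_group_cochain_group finite_cochains by (simp add: cochain_group_simps)

lemma characters_cochain_group: "characters (CG p) = dchains K G p"
  unfolding characters_def dchains_def character_on_def extensional_def cochain_group_simps by auto

section \<open>Coboundaries\<close>

lemma cobdry_apply:
  "x \<in> K n \<Longrightarrow> \<delta> p f n x =
     finprod (G (n - 1 - p)) (\<lambda>y. f (n - 1) y [^]\<^bsub>G (n - 1 - p)\<^esub> dC n x y) (K (n - 1))
      \<otimes>\<^bsub>G (n - 1 - p)\<^esub>
      (if even p then inv\<^bsub>G (n - 1 - p)\<^esub> (dG (n - p) (f n x)) else dG (n - p) (f n x))"
  unfolding cobdry_def by simp

lemma cobdry_closed:
  assumes f: "f \<in> cochains K G p" and q: "q = p + 1"
  shows "\<delta> p f \<in> cochains K G q"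
  unfolding cochains_def
proof (intro CollectI allI conjI impI)
  fix n x assume x: "x \<in> K n"
  interpret H: comm_group "G (n - 1 - p)" by (rule comm_group_G)
  have e: "n - q = n - 1 - p" using q by simp
  have "f (n - 1) y \<in> carrier (G (n - 1 - p))" if "y \<in> K (n - 1)" for y
    using cochainsD(1)[OF f that] by simp
  moreover have "dG (n - p) (f n x) \<in> carrier (G (n - 1 - p))"
    using cochainsD(1)[OF f x] by (intro dG_closed) auto
  ultimately show "\<delta> p f n x \<in> carrier (G (n - q))"
    unfolding cobdry_apply[OF x] e by (auto intro!: H.finprod_closed)
next
  fix n x assume "x \<notin> K n"
  then show "\<delta> p f n x = undefined" unfolding cobdry_def by simp
qed

lemma cobdry_cadd:
  assumes f: "f \<in> cochains K G p" and g: "g \<in> cochains K G p" and q: "q = p + 1"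
  shows "\<delta> p (cadd K G p f g) = cadd K G q (\<delta> p f) (\<delta> p g)"
proof (intro ext)
  fix n x
  show "\<delta> p (cadd K G p f g) n x = cadd K G q (\<delta> p f) (\<delta> p g) n x"
  proof (cases "x \<in> K n")
    case False then show ?thesis unfolding cobdry_def cadd_def by simp
  next
    case x: True
    interpret H: comm_group "G (n - 1 - p)" by (rule comm_group_G)
    have e: "n - q = n - 1 - p" using q by simp
    have fg: "f (n - 1) y \<in> carrier (G (n - 1 - p))" "g (n - 1) y \<in> carrier (G (n - 1 - p))"
      if "y \<in> K (n - 1)" for y
      using cochainsD(1)[OF f that] cochainsD(1)[OF g that] by auto
    have fgx: "f n x \<in> carrier (G (n - p))" "g n x \<in> carrier (G (n - p))"
      using cochainsD(1)[OF f x] cochainsD(1)[OF g x] by auto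
    define a where "a = dG (n - p) (f n x)"
    define b where "b = dG (n - p) (g n x)"
    define P where "P = finprod (G (n - 1 - p)) (\<lambda>y. f (n - 1) y [^]\<^bsub>G (n - 1 - p)\<^esub> dC n x y) (K (n - 1))"
    define Q where "Q = finprod (G (n - 1 - p)) (\<lambda>y. g (n - 1) y [^]\<^bsub>G (n - 1 - p)\<^esub> dC n x y) (K (n - 1))"
    have ab: "a \<in> carrier (G (n - 1 - p))" "b \<in> carrier (G (n - 1 - p))"
      unfolding a_def b_def using fgx by (auto intro: dG_closed)
    have PQ: "P \<in> carrier (G (n - 1 - p))" "Q \<in> carrier (G (n - 1 - p))"
      unfolding P_def Q_def using fg by (auto intro!: H.finprod_closed)
    have dG_ab: "dG (n - p) (f n x \<otimes>\<^bsub>G (n - p)\<^esub> g n x) = a \<otimes>\<^bsub>G (n - 1 - p)\<^esub> b"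
      unfolding a_def b_def using dG_hom[of "n - 1 - p" "n - p"] fgx by (simp add: hom_mult)
    have "finprod (G (n - 1 - p)) (\<lambda>y. cadd K G p f g (n - 1) y [^]\<^bsub>G (n - 1 - p)\<^esub> dC n x y) (K (n - 1))
        = P \<otimes>\<^bsub>G (n - 1 - p)\<^esub> Q"
      unfolding P_def Q_def using fg
      by (subst H.finprod_mult_int_pow[symmetric]) (auto simp: cadd_def Pi_def intro!: H.finprod_cong')
    then have "\<delta> p (cadd K G p f g) n x
        = (P \<otimes>\<^bsub>G (n - 1 - p)\<^esub> Q) \<otimes>\<^bsub>G (n - 1 - p)\<^esub>
          (if even p then inv\<^bsub>G (n - 1 - p)\<^esub> (a \<otimes>\<^bsub>G (n - 1 - p)\<^esub> b) else a \<otimes>\<^bsub>G (n - 1 - p)\<^esub> b)"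
      unfolding cobdry_apply[OF x] using x dG_ab by (simp add: cadd_def)
    also have "\<dots> = (P \<otimes>\<^bsub>G (n - 1 - p)\<^esub> (if even p then inv\<^bsub>G (n - 1 - p)\<^esub> a else a))
        \<otimes>\<^bsub>G (n - 1 - p)\<^esub> (Q \<otimes>\<^bsub>G (n - 1 - p)\<^esub> (if even p then inv\<^bsub>G (n - 1 - p)\<^esub> b else b))"
      using ab PQ by (cases "even p") (simp_all add: H.inv_mult H.m_ac)
    also have "\<dots> = cadd K G q (\<delta> p f) (\<delta> p g) n x"
      using x by (simp add: cadd_def e cobdry_apply P_def Q_def a_def b_def)
    finally show ?thesis .
  qed
qed

lemma group_hom_cobdry: "q = p + 1 \<Longrightarrow> group_hom (CG p) (CG q) (\<delta> p)"
  using comm_group_cochain_group cobdry_closed cobdry_cadd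
  by (intro group_hom.intro group_hom_axioms.intro)
    (auto simp: hom_def Pi_def cochain_group_simps intro: comm_group.axioms(2))

lemma dG_cobdry_neg1:
  assumes t: "t \<in> cochains K G (-1)" and x: "x \<in> K n"
  shows "dG n (\<delta> (-1) t n x)
    = finprod (G (n - 1)) (\<lambda>y. dG n (t (n - 1) y) [^]\<^bsub>G (n - 1)\<^esub> dC n x y) (K (n - 1))"
proof -
  interpret H: comm_group "G (n - 1)" by (rule comm_group_G)
  interpret H': comm_group "G n" by (rule comm_group_G)
  have hom: "dG n \<in> hom (G n) (G (n - 1))" by (rule dG_hom) simp
  have t1: "t (n - 1) y \<in> carrier (G n)" if "y \<in> K (n - 1)" for y
    using cochainsD(1)[OF t that] by simp
  have t0: "t n x \<in> carrier (G (n + 1))" using cochainsD(1)[OF t x] by simp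
  define F where "F = finprod (G n) (\<lambda>y. t (n - 1) y [^]\<^bsub>G n\<^esub> dC n x y) (K (n - 1))"
  have F: "F \<in> carrier (G n)" unfolding F_def using t1 by (auto intro!: H'.finprod_closed)
  have d0: "dG (n + 1) (t n x) \<in> carrier (G n)" using t0 by (intro dG_closed) auto
  have "\<delta> (-1) t n x = F \<otimes>\<^bsub>G n\<^esub> dG (n + 1) (t n x)"
    using x by (simp add: cobdry_def F_def)
  then have "dG n (\<delta> (-1) t n x) = dG n F \<otimes>\<^bsub>G (n - 1)\<^esub> dG n (dG (n + 1) (t n x))"
    using F d0 hom by (simp add: hom_mult)
  also have "\<dots> = dG n F"
    using dG_dG[OF t0] F by (simp add: dG_closed)
  also have "\<dots> = finprod (G (n - 1)) (\<lambda>y. dG n (t (n - 1) y [^]\<^bsub>G n\<^esub> dC n x y)) (K (n - 1))"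
    unfolding F_def using t1 by (intro comm_group_hom_finprod[OF comm_group_G comm_group_G hom finite_K]) auto
  also have "\<dots> = finprod (G (n - 1)) (\<lambda>y. dG n (t (n - 1) y) [^]\<^bsub>G (n - 1)\<^esub> dC n x y) (K (n - 1))"
    using t1 hom by (intro H.finprod_cong') (auto simp: Pi_def hom_int_pow group_G intro: dG_closed)
  finally show ?thesis .
qed

lemma cobdry_cobdry:
  assumes t: "t \<in> cochains K G (-1)"
  shows "\<delta> 0 (\<delta> (-1) t) = \<one>\<^bsub>CG 1\<^esub>"
proof -
  have "\<delta> (-1) t \<in> cochains K G 0" using t by (rule cobdry_closed) simp
  then have "\<delta> 0 (\<delta> (-1) t) \<in> cochains K G 1" by (rule cobdry_closed) simp
  then show ?thesis
    unfolding cochain_group_simps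
  proof (rule cochains_eqI[OF _ czero_closed])
  fix n x assume x: "x \<in> K n"
  interpret H: comm_group "G (n - 1)" by (rule comm_group_G)
  define A where "A y = finprod (G (n - 1)) (\<lambda>z. t (n - 2) z [^]\<^bsub>G (n - 1)\<^esub> dC (n - 1) y z) (K (n - 2))" for y
  define B where "B y = dG n (t (n - 1) y)" for y
  define P where "P = finprod (G (n - 1)) (\<lambda>y. B y [^]\<^bsub>G (n - 1)\<^esub> dC n x y) (K (n - 1))"
  have t2: "t (n - 2) z \<in> carrier (G (n - 1))" if "z \<in> K (n - 2)" for z
    using cochainsD(1)[OF t that] by simp
  have A: "A y \<in> carrier (G (n - 1))" for y unfolding A_def using t2 by (auto intro!: H.finprod_closed)
  have B: "B y \<in> carrier (G (n - 1))" if "y \<in> K (n - 1)" for y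
    unfolding B_def using cochainsD(1)[OF t that] by (intro dG_closed) auto
  have P: "P \<in> carrier (G (n - 1))" unfolding P_def using B by (auto intro!: H.finprod_closed)
  have "\<delta> (-1) t (n - 1) y = A y \<otimes>\<^bsub>G (n - 1)\<^esub> B y" if "y \<in> K (n - 1)" for y
    using that by (simp add: cobdry_def A_def B_def algebra_simps)
  then have "finprod (G (n - 1)) (\<lambda>y. \<delta> (-1) t (n - 1) y [^]\<^bsub>G (n - 1)\<^esub> dC n x y) (K (n - 1))
      = finprod (G (n - 1)) (\<lambda>y. A y [^]\<^bsub>G (n - 1)\<^esub> dC n x y) (K (n - 1)) \<otimes>\<^bsub>G (n - 1)\<^esub> P"
    unfolding P_def using A B
    by (subst H.finprod_mult_int_pow[symmetric]) (auto simp: Pi_def intro!: H.finprod_cong')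
  also have "finprod (G (n - 1)) (\<lambda>y. A y [^]\<^bsub>G (n - 1)\<^esub> dC n x y) (K (n - 1)) = \<one>\<^bsub>G (n - 1)\<^esub>"
    unfolding A_def using finite_K t2 dC_dC[OF x]
    by (intro H.finprod_finprod_pow_eq_one) (auto simp: mult.commute)
  finally have "\<delta> 0 (\<delta> (-1) t) n x = P \<otimes>\<^bsub>G (n - 1)\<^esub> inv\<^bsub>G (n - 1)\<^esub> P"
    using x P dG_cobdry_neg1[OF t x] by (simp add: cobdry_apply P_def B_def)
  then show "\<delta> 0 (\<delta> (-1) t) n x = czero K G 1 n x"
    using x P by (simp add: czero_def)
  qed
qed

end

section \<open>The operators \<open>\<A>\<^sub>s\<close> and \<open>\<B>\<^sub>v\<close>\<close>

context cochain_setting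
begin

abbreviation \<A> where "\<A> \<equiv> calA K dC G dG"
abbreviation \<B> where "\<B> \<equiv> calB K dC G dG"

abbreviation translate :: "(int \<Rightarrow> 'k \<Rightarrow> 'g) \<Rightarrow> (int \<Rightarrow> 'k \<Rightarrow> 'g) \<Rightarrow> (int \<Rightarrow> 'k \<Rightarrow> 'g)" where
  "translate g t \<equiv> g \<otimes>\<^bsub>CG 0\<^esub> inv\<^bsub>CG 0\<^esub> \<delta> (-1) t"

lemma card_cochains_pos: "0 < card (cochains K G p)"
  using finite_cochains czero_closed card_gt_0_iff by blast

lemma translate_closed:
  assumes "g \<in> cochains K G 0" "t \<in> cochains K G (-1)"
  shows "translate g t \<in> cochains K G 0"
proof -
  interpret X: comm_group "CG 0" by (rule comm_group_cochain_group)
  have "g \<in> carrier (CG 0)" "\<delta> (-1) t \<in> carrier (CG 0)"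
    using assms cobdry_closed[OF assms(2)] by (simp_all add: cochain_group_simps)
  then have "translate g t \<in> carrier (CG 0)" by simp
  then show ?thesis by (simp add: cochain_group_simps)
qed

lemma translate_one:
  assumes "g \<in> cochains K G 0"
  shows "translate g \<one>\<^bsub>CG (-1)\<^esub> = g"
proof -
  interpret X: comm_group "CG 0" by (rule comm_group_cochain_group)
  interpret d: group_hom "CG (-1)" "CG 0" "\<delta> (-1)" by (rule group_hom_cobdry) simp
  show ?thesis using assms by (simp add: cochain_group_simps(1))
qed

lemma translate_translate:
  assumes "g \<in> cochains K G 0" "t \<in> cochains K G (-1)" "t' \<in> cochains K G (-1)"
  shows "translate (translate g t) t' = translate g (t \<otimes>\<^bsub>CG (-1)\<^esub> t')"
proof -
  interpret X: comm_group "CG 0" by (rule comm_group_cochain_group)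
  interpret d: group_hom "CG (-1)" "CG 0" "\<delta> (-1)" by (rule group_hom_cobdry) simp
  have "g \<in> carrier (CG 0)" "t \<in> carrier (CG (-1))" "t' \<in> carrier (CG (-1))"
    using assms by (simp_all add: cochain_group_simps)
  then show ?thesis by (simp add: X.inv_mult X.m_assoc)
qed

text \<open>This is where \<open>\<delta>\<^sup>0 \<circ> \<delta>\<^sup>-\<^sup>1 = 0\<close> enters: the translations \<open>A\<^sub>t\<close> preserve \<open>\<delta>\<^sup>0 f\<close>,
  on which \<open>\<B>\<^sub>v\<close> depends.\<close>

lemma cobdry_translate:
  assumes g: "g \<in> cochains K G 0" and t: "t \<in> cochains K G (-1)"
  shows "\<delta> 0 (translate g t) = \<delta> 0 g"
proof -
  interpret X: comm_group "CG 0" by (rule comm_group_cochain_group)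
  interpret d: group_hom "CG 0" "CG 1" "\<delta> 0" by (rule group_hom_cobdry) simp
  have "g \<in> carrier (CG 0)" "\<delta> (-1) t \<in> carrier (CG 0)"
    using g cobdry_closed[OF t] by (simp_all add: cochain_group_simps)
  then show ?thesis using cobdry_cobdry[OF t] by (simp add: d.hom_mult d.hom_inv)
qed

lemma Aop_apply:
  assumes "t \<in> cochains K G (-1)"
  shows "Aop K dC G dG t \<psi> g = (if g \<in> cochains K G 0 then \<psi> (translate g t) else 0)"
  using cochain_group_inv[OF cobdry_closed[OF assms, of 0]]
  unfolding Aop_def Pop_def by (simp add: cochain_group_simps)

lemma calA_outside: "g \<notin> cochains K G 0 \<Longrightarrow> \<A> s \<psi> g = 0"
  unfolding calA_def Aop_def Pop_def by simp

lemma calA_apply: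
  assumes "g \<in> cochains K G 0"
  shows "\<A> s \<psi> g = 1 / of_nat (card (cochains K G (-1))) *
     (\<Sum>t\<in>cochains K G (-1). s t * \<psi> (translate g t))"
  unfolding calA_def using Aop_apply assms by (simp cong: sum.cong)

lemma calA_translate:
  assumes s: "s \<in> dchains K G (-1)" and g: "g \<in> cochains K G 0" and t: "t \<in> cochains K G (-1)"
  shows "\<A> s \<psi> (translate g t) = cnj (s t) * \<A> s \<psi> g"
proof -
  interpret T: finite_comm_group "CG (-1)" by (rule finite_comm_group_cochain_group)
  have s: "s \<in> characters (CG (-1))" using s by (simp add: characters_cochain_group)
  have tT: "t \<in> carrier (CG (-1))" using t by (simp add: cochain_group_simps)
  have "(\<Sum>t'\<in>carrier (CG (-1)). s t' * \<psi> (translate (translate g t) t'))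
      = (\<Sum>t'\<in>carrier (CG (-1)). s (inv\<^bsub>CG (-1)\<^esub> t \<otimes>\<^bsub>CG (-1)\<^esub> (t \<otimes>\<^bsub>CG (-1)\<^esub> t'))
          * \<psi> (translate g (t \<otimes>\<^bsub>CG (-1)\<^esub> t')))"
  proof (rule sum.cong)
    fix t' assume t': "t' \<in> carrier (CG (-1))"
    then have "t' \<in> cochains K G (-1)" by (simp add: cochain_group_simps)
    then show "s t' * \<psi> (translate (translate g t) t')
        = s (inv\<^bsub>CG (-1)\<^esub> t \<otimes>\<^bsub>CG (-1)\<^esub> (t \<otimes>\<^bsub>CG (-1)\<^esub> t')) * \<psi> (translate g (t \<otimes>\<^bsub>CG (-1)\<^esub> t'))"
      using g t tT t' by (simp add: translate_translate T.m_assoc[symmetric])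
  qed simp
  also have "\<dots> = (\<Sum>u\<in>carrier (CG (-1)). s (inv\<^bsub>CG (-1)\<^esub> t \<otimes>\<^bsub>CG (-1)\<^esub> u) * \<psi> (translate g u))"
    by (rule T.sum_left_translate[OF tT])
  also have "\<dots> = cnj (s t) * (\<Sum>u\<in>carrier (CG (-1)). s u * \<psi> (translate g u))"
    using tT T.character_mult[OF s] T.character_inv[OF s tT]
    by (auto simp: sum_distrib_left mult.assoc intro!: sum.cong)
  finally show ?thesis
    using calA_apply[OF g] calA_apply[OF translate_closed[OF g t]] by (simp add: cochain_group_simps)
qed

text \<open>By orthogonality of the characters of \<open>hom(C,G)\<^sup>1\<close>, \<open>\<B>\<^sub>v\<close> is the projection onto the
  span of the \<open>|f\<rangle>\<close> with \<open>\<delta>\<^sup>0 f = -v\<close>.\<close>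

lemma calB_apply:
  assumes v: "v \<in> cochains K G 1"
  shows "\<B> v \<psi> g =
    (if g \<in> cochains K G 0 \<and> v \<otimes>\<^bsub>CG 1\<^esub> \<delta> 0 g = \<one>\<^bsub>CG 1\<^esub> then \<psi> g else 0)"
proof (cases "g \<in> cochains K G 0")
  case False
  then show ?thesis unfolding calB_def Bop_def Qop_def by simp
next
  case g: True
  interpret V: finite_comm_group "CG 1" by (rule finite_comm_group_cochain_group)
  have dg: "\<delta> 0 g \<in> cochains K G 1" using cobdry_closed[OF g] by simp
  have vc: "v \<in> carrier (CG 1)" and dgc: "\<delta> 0 g \<in> carrier (CG 1)"
    using v dg by (simp_all add: cochain_group_simps)
  have "(\<Sum>m\<in>dchains K G 1. m v * Bop K dC G dG m \<psi> g)
      = (\<Sum>m\<in>characters (CG 1). m (v \<otimes>\<^bsub>CG 1\<^esub> \<delta> 0 g)) * \<psi> g"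
    unfolding sum_distrib_right characters_cochain_group
    using V.character_mult[OF _ vc dgc, unfolded characters_cochain_group] g
    by (intro sum.cong) (simp_all add: Bop_def Qop_def dual_bdry_def)
  also have "\<dots> = (if v \<otimes>\<^bsub>CG 1\<^esub> \<delta> 0 g = \<one>\<^bsub>CG 1\<^esub> then of_nat (card (cochains K G 1)) else 0) * \<psi> g"
    using V.sum_characters[of "v \<otimes>\<^bsub>CG 1\<^esub> \<delta> 0 g"] V.card_characters v dg
    by (simp add: cochain_group_simps cadd_closed)
  finally show ?thesis
    using g card_cochains_pos[of 1] V.card_characters
    unfolding calB_def by (simp add: characters_cochain_group cochain_group_simps)
qed

lemma calA_calB_commute:
  assumes v: "v \<in> cochains K G 1"
  shows "\<A> s (\<B> v \<psi>) = \<B> v (\<A> s \<psi>)"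
proof
  fix g
  show "\<A> s (\<B> v \<psi>) g = \<B> v (\<A> s \<psi>) g"
  proof (cases "g \<in> cochains K G 0")
    case False
    then show ?thesis by (simp add: calA_outside calB_apply[OF v])
  next
    case g: True
    then show ?thesis
      by (simp add: calA_apply calB_apply[OF v] translate_closed cobdry_translate cong: sum.cong)
  qed
qed

lemma calB_calB:
  assumes v: "v \<in> cochains K G 1" and v': "v' \<in> cochains K G 1"
  shows "\<B> v (\<B> v' \<psi>) = (\<lambda>g. (if v = v' then 1 else 0) * \<B> v \<psi> g)"
proof
  fix g
  interpret V: comm_group "CG 1" by (rule comm_group_cochain_group)
  have "v = v'" if g: "g \<in> cochains K G 0"
    and vg: "v \<otimes>\<^bsub>CG 1\<^esub> \<delta> 0 g = \<one>\<^bsub>CG 1\<^esub>" and v'g: "v' \<otimes>\<^bsub>CG 1\<^esub> \<delta> 0 g = \<one>\<^bsub>CG 1\<^esub>"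
  proof -
    have "v \<in> carrier (CG 1)" "v' \<in> carrier (CG 1)" "\<delta> 0 g \<in> carrier (CG 1)"
      using v v' cobdry_closed[OF g] by (simp_all add: cochain_group_simps)
    then show "v = v'" using vg v'g V.inv_equality by metis
  qed
  then show "\<B> v (\<B> v' \<psi>) g = (if v = v' then 1 else 0) * \<B> v \<psi> g"
    by (auto simp: calB_apply[OF v] calB_apply[OF v'])
qed

lemma calA_calA:
  assumes s: "s \<in> dchains K G (-1)" and s': "s' \<in> dchains K G (-1)"
  shows "\<A> s (\<A> s' \<psi>) = (\<lambda>g. (if s = s' then 1 else 0) * \<A> s \<psi> g)"
proof
  fix g
  interpret T: finite_comm_group "CG (-1)" by (rule finite_comm_group_cochain_group)
  show "\<A> s (\<A> s' \<psi>) g = (if s = s' then 1 else 0) * \<A> s \<psi> g"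
  proof (cases "g \<in> cochains K G 0")
    case False
    then show ?thesis by (simp add: calA_outside)
  next
    case g: True
    define c where "c = 1 / (of_nat (card (cochains K G (-1))) :: complex)"
    have "\<A> s (\<A> s' \<psi>) g = c * (\<Sum>t\<in>cochains K G (-1). s t * \<A> s' \<psi> (translate g t))"
      by (simp only: calA_apply[OF g] c_def)
    also have "\<dots> = c * (\<Sum>t\<in>cochains K G (-1). s t * cnj (s' t)) * \<A> s' \<psi> g"
      using calA_translate[OF s' g] by (simp add: sum_distrib_right mult.assoc)
    also have "\<dots> = (if s = s' then 1 else 0) * \<A> s' \<psi> g"
      using T.character_orthogonality[of s s'] s s' card_cochains_pos[of "-1"]
      by (simp add: c_def characters_cochain_group cochain_group_simps)
    finally show ?thesis by simp
  qed
qed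

lemma sum_calA:
  assumes \<psi>: "\<psi> \<in> Hsp K G"
  shows "(\<lambda>g. \<Sum>s\<in>dchains K G (-1). \<A> s \<psi> g) = \<psi>"
proof
  fix g
  interpret T: finite_comm_group "CG (-1)" by (rule finite_comm_group_cochain_group)
  show "(\<Sum>s\<in>dchains K G (-1). \<A> s \<psi> g) = \<psi> g"
  proof (cases "g \<in> cochains K G 0")
    case False
    then show ?thesis using \<psi> unfolding Hsp_def by (simp add: calA_outside)
  next
    case g: True
    define c where "c = 1 / (of_nat (card (cochains K G (-1))) :: complex)"
    have "(\<Sum>s\<in>dchains K G (-1). \<A> s \<psi> g)
        = c * (\<Sum>s\<in>dchains K G (-1). \<Sum>t\<in>cochains K G (-1). s t * \<psi> (translate g t))"
      by (simp only: calA_apply[OF g] c_def sum_distrib_left)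
    also have "\<dots> = c * (\<Sum>t\<in>cochains K G (-1). (\<Sum>s\<in>dchains K G (-1). s t) * \<psi> (translate g t))"
      by (simp add: sum.swap[of _ "dchains K G (-1)"] sum_distrib_right)
    also have "\<dots> = c * (\<Sum>t\<in>cochains K G (-1).
        if t = \<one>\<^bsub>CG (-1)\<^esub> then of_nat (card (cochains K G (-1))) * \<psi> (translate g t) else 0)"
    proof -
      have "(\<Sum>s\<in>dchains K G (-1). s t) =
          (if t = \<one>\<^bsub>CG (-1)\<^esub> then of_nat (card (cochains K G (-1))) else 0)"
        if "t \<in> cochains K G (-1)" for t
        using T.sum_characters[of t] T.card_characters that
        by (simp add: characters_cochain_group cochain_group_simps)
      then show ?thesis by (intro arg_cong[where f = "(*) c"] sum.cong) auto
    qed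
    also have "\<dots> = \<psi> g"
      using card_cochains_pos[of "-1"] translate_one[OF g] czero_closed[of "-1"]
      by (auto simp: c_def finite_cochains cochain_group_simps)
    finally show ?thesis .
  qed
qed

lemma sum_calB:
  assumes \<psi>: "\<psi> \<in> Hsp K G"
  shows "(\<lambda>g. \<Sum>v\<in>cochains K G 1. \<B> v \<psi> g) = \<psi>"
proof
  fix g
  interpret V: comm_group "CG 1" by (rule comm_group_cochain_group)
  show "(\<Sum>v\<in>cochains K G 1. \<B> v \<psi> g) = \<psi> g"
  proof (cases "g \<in> cochains K G 0")
    case False
    then show ?thesis using \<psi> unfolding Hsp_def by (simp add: calB_apply)
  next
    case g: True
    have dg: "\<delta> 0 g \<in> carrier (CG 1)" using cobdry_closed[OF g, of 1] by (simp add: cochain_group_simps)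
    have "v \<otimes>\<^bsub>CG 1\<^esub> \<delta> 0 g = \<one>\<^bsub>CG 1\<^esub> \<longleftrightarrow> v = inv\<^bsub>CG 1\<^esub> \<delta> 0 g" if "v \<in> cochains K G 1" for v
      using that dg by (metis cochain_group_simps(1) V.inv_equality V.l_inv)
    then have "(\<Sum>v\<in>cochains K G 1. \<B> v \<psi> g)
        = (\<Sum>v\<in>cochains K G 1. if v = inv\<^bsub>CG 1\<^esub> \<delta> 0 g then \<psi> g else 0)"
      using g by (intro sum.cong) (simp_all add: calB_apply)
    also have "\<dots> = \<psi> g" using V.inv_closed[OF dg] finite_cochains by (simp add: cochain_group_simps)
    finally show ?thesis .
  qed
qed

end

theorem lemma1:
  fixes K :: "int \<Rightarrow> 'k set" and dC :: "int \<Rightarrow> 'k \<Rightarrow> 'k \<Rightarrow> int"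
    and G :: "int \<Rightarrow> 'g monoid" and dG :: "int \<Rightarrow> 'g \<Rightarrow> 'g"
  assumes "setting K dC G dG"
  shows "(\<forall>s\<in>dchains K G (-1). \<forall>v\<in>cochains K G 1. \<forall>\<psi>\<in>Hsp K G.
            calA K dC G dG s (calB K dC G dG v \<psi>) = calB K dC G dG v (calA K dC G dG s \<psi>))
       \<and> (\<forall>s\<in>dchains K G (-1). \<forall>s'\<in>dchains K G (-1). \<forall>\<psi>\<in>Hsp K G.
            calA K dC G dG s (calA K dC G dG s' \<psi>)
              = (\<lambda>g. (if s = s' then 1 else 0) * calA K dC G dG s \<psi> g))
       \<and> (\<forall>v\<in>cochains K G 1. \<forall>v'\<in>cochains K G 1. \<forall>\<psi>\<in>Hsp K G.
            calB K dC G dG v (calB K dC G dG v' \<psi>)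
              = (\<lambda>g. (if v = v' then 1 else 0) * calB K dC G dG v \<psi> g))
       \<and> (\<forall>\<psi>\<in>Hsp K G. (\<lambda>g. \<Sum>s\<in>dchains K G (-1). calA K dC G dG s \<psi> g) = \<psi>)
       \<and> (\<forall>\<psi>\<in>Hsp K G. (\<lambda>g. \<Sum>v\<in>cochains K G 1. calB K dC G dG v \<psi> g) = \<psi>)"
proof -
  interpret cochain_setting K dC G dG by (rule cochain_setting.intro) (rule assms)
  show ?thesis using calA_calB_commute calA_calA calB_calB sum_calA sum_calB by blast
qed

end
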